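(* Let $(X,\|\cdot\|)$ be a normed linear space and let $I$ be a non-trivial admissible ideal in $\mathbb{N}$. A sequence $x=\{x_k\}_{k\in\mathbb{N}}$ in $X$ is $I$-statistically bounded if and only if there exists a real number $r>0$ such that $I\text{-}st\text{-}\mathrm{LIM}_x^r\ne\emptyset$.
   Context: An ideal $I$ in $\mathbb{N}$ is a family of subsets of $\mathbb{N}$ containing $\emptyset$, closed under finite unions and under taking subsets; it is non-trivial if $\mathbb{N}\notin I$ and admissible if $\{n\}\in I$ for every $n$. A sequence $x$ in $X$ is $I$-statistically bounded if there exists $G>0$ such that for every $\delta>0$, $\{n\in\mathbb{N}:\frac1n|\{k\le n:\|x_k\|\ge G\}|\ge\delta\}\in I$. For $r\ge0$, $x$ is $r$-$I$-statistically convergent to $\xi$ if for every $\varepsilon>0$ and $\delta>0$, $\{n\in\mathbb{N}:\frac1n|\{k\le n:\|x_k-\xi\|\ge r+\varepsilon\}|\ge\delta\}\in I$; $I\text{-}st\text{-}\mathrm{LIM}_x^r$ is the set of all such $\xi$. *)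

theory Defs
  imports "HOL-Analysis.Analysis"
begin

text \<open>The paper's \<nat> = {1,2,3,...} is represented by the nat set {1..}.
  An ideal is a family of subsets of {1..}.\<close>

definition ideal_on_nat :: "nat set set \<Rightarrow> bool" where
  "ideal_on_nat I \<longleftrightarrow> I \<subseteq> Pow {1..} \<and> {} \<in> I \<and>
     (\<forall>A\<in>I. \<forall>B\<in>I. A \<union> B \<in> I) \<and> (\<forall>A\<in>I. \<forall>B. B \<subseteq> A \<longrightarrow> B \<in> I)"

definition nontrivial_ideal :: "nat set set \<Rightarrow> bool" where
  "nontrivial_ideal I \<longleftrightarrow> {1..} \<notin> I"

definition admissible_ideal :: "nat set set \<Rightarrow> bool" where
  "admissible_ideal I \<longleftrightarrow> (\<forall>n\<ge>1. {n} \<in> I)"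

definition I_stat_bounded :: "nat set set \<Rightarrow> (nat \<Rightarrow> 'a::real_normed_vector) \<Rightarrow> bool" where
  "I_stat_bounded I x \<longleftrightarrow> (\<exists>G>0. \<forall>\<delta>>0.
     {n. n \<ge> 1 \<and> real (card {k\<in>{1..n}. norm (x k) \<ge> G}) / real n \<ge> \<delta>} \<in> I)"

definition r_I_stat_conv :: "nat set set \<Rightarrow> real \<Rightarrow> (nat \<Rightarrow> 'a::real_normed_vector) \<Rightarrow> 'a \<Rightarrow> bool" where
  "r_I_stat_conv I r x \<xi> \<longleftrightarrow> (\<forall>\<epsilon>>0. \<forall>\<delta>>0.
     {n. n \<ge> 1 \<and> real (card {k\<in>{1..n}. norm (x k - \<xi>) \<ge> r + \<epsilon>}) / real n \<ge> \<delta>} \<in> I)"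

definition I_st_LIM :: "nat set set \<Rightarrow> real \<Rightarrow> (nat \<Rightarrow> 'a::real_normed_vector) \<Rightarrow> 'a set" where
  "I_st_LIM I r x = {\<xi>. r_I_stat_conv I r x \<xi>}"

end

theory Submission
  imports Defs
begin

text \<open>If the event \<open>norm (x k) \<ge> G\<close> is rare, then \<open>x\<close> is \<open>G\<close>-statistically
  convergent to \<open>0\<close>; conversely, if \<open>norm (x k - \<xi>) \<ge> r + 1\<close> is rare, the triangle
  inequality makes \<open>norm (x k) \<ge> r + norm \<xi> + 1\<close> rare. Both directions only use that an
  ideal is closed under subsets, since a pointwise weaker event has smaller upper densities.\<close>

definition density_exceeding :: "(nat \<Rightarrow> bool) \<Rightarrow> real \<Rightarrow> nat set" where
  "density_exceeding P \<delta> = {n. n \<ge> 1 \<and> real (card {k\<in>{1..n}. P k}) / real n \<ge> \<delta>}"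

lemma density_exceeding_mono:
  assumes "\<And>k. P k \<Longrightarrow> Q k"
  shows "density_exceeding P \<delta> \<subseteq> density_exceeding Q \<delta>"
proof
  fix n assume "n \<in> density_exceeding P \<delta>"
  hence n: "n \<ge> 1" "real (card {k\<in>{1..n}. P k}) / real n \<ge> \<delta>"
    by (auto simp: density_exceeding_def)
  have "card {k\<in>{1..n}. P k} \<le> card {k\<in>{1..n}. Q k}"
    by (rule card_mono) (auto simp: assms)
  hence "real (card {k\<in>{1..n}. P k}) / real n \<le> real (card {k\<in>{1..n}. Q k}) / real n"
    by (simp add: divide_right_mono)
  with n show "n \<in> density_exceeding Q \<delta>" by (auto simp: density_exceeding_def)
qed

lemma ideal_on_nat_subset:
  "ideal_on_nat I \<Longrightarrow> A \<in> I \<Longrightarrow> B \<subseteq> A \<Longrightarrow> B \<in> I"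
  unfolding ideal_on_nat_def by blast

lemma density_exceeding_in_ideal_mono:
  assumes "ideal_on_nat I" "\<And>k. P k \<Longrightarrow> Q k" "density_exceeding Q \<delta> \<in> I"
  shows "density_exceeding P \<delta> \<in> I"
  using assms ideal_on_nat_subset density_exceeding_mono by metis

lemma I_stat_bounded_iff_density:
  "I_stat_bounded I x \<longleftrightarrow>
     (\<exists>G>0. \<forall>\<delta>>0. density_exceeding (\<lambda>k. norm (x k) \<ge> G) \<delta> \<in> I)"
  unfolding I_stat_bounded_def density_exceeding_def ..

lemma r_I_stat_conv_iff_density:
  "r_I_stat_conv I r x \<xi> \<longleftrightarrow>
     (\<forall>\<epsilon>>0. \<forall>\<delta>>0. density_exceeding (\<lambda>k. norm (x k - \<xi>) \<ge> r + \<epsilon>) \<delta> \<in> I)"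
  unfolding r_I_stat_conv_def density_exceeding_def ..

lemma r_I_stat_conv_zero_if_I_stat_bound:
  assumes "ideal_on_nat I"
    and bound: "\<And>\<delta>. \<delta> > 0 \<Longrightarrow> density_exceeding (\<lambda>k. norm (x k) \<ge> G) \<delta> \<in> I"
  shows "r_I_stat_conv I G x 0"
  unfolding r_I_stat_conv_iff_density
proof (intro allI impI)
  fix \<epsilon> \<delta> :: real assume "\<epsilon> > 0" "\<delta> > 0"
  then show "density_exceeding (\<lambda>k. norm (x k - 0) \<ge> G + \<epsilon>) \<delta> \<in> I"
    by (intro density_exceeding_in_ideal_mono[OF assms(1) _ bound]) auto
qed

lemma I_stat_bound_if_r_I_stat_conv:
  fixes x :: "nat \<Rightarrow> 'a::real_normed_vector"
  assumes "ideal_on_nat I" and conv: "r_I_stat_conv I r x \<xi>" and "\<delta> > 0"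
  shows "density_exceeding (\<lambda>k. norm (x k) \<ge> r + norm \<xi> + 1) \<delta> \<in> I"
proof (rule density_exceeding_in_ideal_mono[OF assms(1)])
  fix k assume "r + norm \<xi> + 1 \<le> norm (x k)"
  moreover have "norm (x k) \<le> norm (x k - \<xi>) + norm \<xi>"
    using norm_triangle_ineq[of "x k - \<xi>" \<xi>] by simp
  ultimately show "r + 1 \<le> norm (x k - \<xi>)" by linarith
next
  show "density_exceeding (\<lambda>k. norm (x k - \<xi>) \<ge> r + 1) \<delta> \<in> I"
    using conv \<open>\<delta> > 0\<close> unfolding r_I_stat_conv_iff_density by simp
qed

theorem theorem3p7:
  fixes I :: "nat set set" and x :: "nat \<Rightarrow> 'a::real_normed_vector"
  assumes "ideal_on_nat I" and "nontrivial_ideal I" and "admissible_ideal I"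
  shows "I_stat_bounded I x \<longleftrightarrow> (\<exists>r>0. I_st_LIM I r x \<noteq> {})"
proof
  assume "I_stat_bounded I x"
  then obtain G where "G > 0"
    and "\<And>\<delta>. \<delta> > 0 \<Longrightarrow> density_exceeding (\<lambda>k. norm (x k) \<ge> G) \<delta> \<in> I"
    unfolding I_stat_bounded_iff_density by blast
  with r_I_stat_conv_zero_if_I_stat_bound[OF assms(1)]
  show "\<exists>r>0. I_st_LIM I r x \<noteq> {}" unfolding I_st_LIM_def by blast
next
  assume "\<exists>r>0. I_st_LIM I r x \<noteq> {}"
  then obtain r \<xi> where "r > 0" and "r_I_stat_conv I r x \<xi>"
    unfolding I_st_LIM_def by blast
  moreover have "r + norm \<xi> + 1 > 0" using \<open>r > 0\<close> norm_ge_zero[of \<xi>] by linarith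
  ultimately show "I_stat_bounded I x"
    unfolding I_stat_bounded_iff_density
    using I_stat_bound_if_r_I_stat_conv[OF assms(1)] by blast
qed

end
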